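(* For $n\ge2$ and all $P,Q\in\Gamma_n$, $D_{\Psi\Delta}(P\|Q)\le \frac65 D_{\Psi I}(P\|Q)$.
   Context: $\Gamma_n=\{P=(p_1,\dots,p_n): p_i>0,\ \sum p_i=1\}$. $\Delta(P\|Q)=\sum_{i=1}^n\frac{(p_i-q_i)^2}{p_i+q_i}$; $\Psi(P\|Q)=\sum_{i=1}^n\frac{(p_i-q_i)^2(p_i+q_i)}{p_iq_i}$; $I(P\|Q)=\frac12\Big[\sum_{i=1}^n p_i\ln\frac{2p_i}{p_i+q_i}+\sum_{i=1}^n q_i\ln\frac{2q_i}{p_i+q_i}\Big]$. $D_{\Psi\Delta}=\frac1{16}\Psi-\frac14\Delta$, $D_{\Psi I}=\frac1{16}\Psi-I$. *)

theory Defs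
  imports Complex_Main
begin

definition Gamma :: "nat \<Rightarrow> (nat \<Rightarrow> real) set" where
  "Gamma n = {p. (\<forall>i<n. p i > 0) \<and> (\<Sum>i<n. p i) = 1}"

definition Delta_div :: "nat \<Rightarrow> (nat \<Rightarrow> real) \<Rightarrow> (nat \<Rightarrow> real) \<Rightarrow> real" where
  "Delta_div n p q = (\<Sum>i<n. (p i - q i)^2 / (p i + q i))"

definition Psi_div :: "nat \<Rightarrow> (nat \<Rightarrow> real) \<Rightarrow> (nat \<Rightarrow> real) \<Rightarrow> real" where
  "Psi_div n p q = (\<Sum>i<n. (p i - q i)^2 * (p i + q i) / (p i * q i))"

definition I_div :: "nat \<Rightarrow> (nat \<Rightarrow> real) \<Rightarrow> (nat \<Rightarrow> real) \<Rightarrow> real" where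
  "I_div n p q = (1/2) * ((\<Sum>i<n. p i * ln (2 * p i / (p i + q i)))
                         + (\<Sum>i<n. q i * ln (2 * q i / (p i + q i))))"

definition D_Psi_Delta :: "nat \<Rightarrow> (nat \<Rightarrow> real) \<Rightarrow> (nat \<Rightarrow> real) \<Rightarrow> real" where
  "D_Psi_Delta n p q = (1/16) * Psi_div n p q - (1/4) * Delta_div n p q"

definition D_Psi_I :: "nat \<Rightarrow> (nat \<Rightarrow> real) \<Rightarrow> (nat \<Rightarrow> real) \<Rightarrow> real" where
  "D_Psi_I n p q = (1/16) * Psi_div n p q - I_div n p q"

end

theory Submission
  imports Defs
begin

text \<open>All three divergences are sums of per-coordinate terms, and the inequality already holds
  term by term; only positivity of the coordinates is used, not \<open>n \<ge> 2\<close> or the normalisation.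
  Writing \<open>p = s(1+u)\<close>, \<open>q = s(1-u)\<close> with \<open>s > 0\<close> and \<open>\<bar>u\<bar> < 1\<close>, the difference of the two
  sides at one coordinate is \<open>s\<close> times
  \<open>g(u) = u\<^sup>2/2 + u\<^sup>2/(10(1-u\<^sup>2)) - (3/5)((1+u) ln(1+u) + (1-u) ln(1-u))\<close>.
  This even function vanishes at \<open>0\<close>, and it is nondecreasing on \<open>[0,1)\<close> because \<open>g' \<ge> 0\<close> is the
  bound \<open>ln(1+u) - ln(1-u) \<le> 5u/3 + u/(3(1-u\<^sup>2)\<^sup>2)\<close>, which in turn holds since the derivative of
  its right-hand side minus its left-hand side is \<open>(1-w)\<^sup>2(4+5w)/(3w\<^sup>3) \<ge> 0\<close> with \<open>w = 1-u\<^sup>2\<close>.\<close>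

lemma ln_one_plus_minus_ln_one_minus_le:
  fixes u :: real assumes "0 \<le> u" "u < 1"
  shows "ln (1 + u) - ln (1 - u) \<le> 5/3 * u + u / (3 * (1 - u^2)^2)"
proof -
  define k where "k x = 5/3 * x + x / (3 * (1 - x^2)^2) - ln (1 + x) + ln (1 - x)" for x :: real
  have "k 0 \<le> k u"
  proof (rule DERIV_nonneg_imp_nondecreasing[OF assms(1)])
    fix x :: real assume "0 \<le> x" "x \<le> u"
    with assms have x: "0 \<le> x" "x < 1" by auto
    define w where "w = 1 - x^2"
    have w: "0 < w" unfolding w_def using x by (simp add: abs_square_less_1)
    have "((\<lambda>z. z / (3 * (1 - z^2)^2)) has_real_derivative
        (1 * (3 * w^2) - x * (3 * (2 * w * (- (2 * x))))) / (3 * w^2)^2) (at x)"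
      using w by (auto intro!: derivative_eq_intros simp: w_def)
    moreover have "(1 * (3 * w^2) - x * (3 * (2 * w * (- (2 * x))))) / (3 * w^2)^2
        = (w + 4 * x^2) / (3 * w^3)"
      using w by (simp add: field_simps power2_eq_square power3_eq_cube)
    ultimately have "((\<lambda>z. z / (3 * (1 - z^2)^2)) has_real_derivative (w + 4 * x^2) / (3 * w^3)) (at x)"
      by simp
    moreover have "((\<lambda>z. 5/3 * z) has_real_derivative 5/3) (at x)"
      by (auto intro!: derivative_eq_intros)
    moreover have "((\<lambda>z. ln (1 + z)) has_real_derivative 1 / (1 + x)) (at x)"
      using x by (auto intro!: derivative_eq_intros)
    moreover have "((\<lambda>z. ln (1 - z)) has_real_derivative - 1 / (1 - x)) (at x)"
      using x by (auto intro!: derivative_eq_intros)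
    ultimately have deriv: "(k has_real_derivative
        5/3 + (w + 4 * x^2) / (3 * w^3) - 1 / (1 + x) + - 1 / (1 - x)) (at x)"
      unfolding k_def by (intro DERIV_add DERIV_diff)
    have "1 / (1 + x) + 1 / (1 - x) = 2 / w"
      using x by (simp add: w_def field_simps power2_eq_square)
    moreover have "5/3 + (w + 4 * x^2) / (3 * w^3) - 2 / w = (1 - w)^2 * (4 + 5 * w) / (3 * w^3)"
    proof -
      have x2: "x^2 = 1 - w" by (simp add: w_def)
      show ?thesis unfolding x2 using w by (simp add: field_simps power2_eq_square power3_eq_cube)
    qed
    ultimately have "5/3 + (w + 4 * x^2) / (3 * w^3) - 1 / (1 + x) + - 1 / (1 - x)
        = (1 - w)^2 * (4 + 5 * w) / (3 * w^3)"
      unfolding minus_divide_left[symmetric] by linarith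
    moreover have "0 \<le> (1 - w)^2 * (4 + 5 * w) / (3 * w^3)"
      using w by simp
    ultimately show "\<exists>y. (k has_real_derivative y) (at x) \<and> 0 \<le> y"
      using deriv by auto
  qed
  then show ?thesis by (simp add: k_def)
qed

lemma one_plus_minus_xlnx_le_nonneg:
  fixes u :: real assumes "0 \<le> u" "u < 1"
  shows "3/5 * ((1 + u) * ln (1 + u) + (1 - u) * ln (1 - u)) \<le> u^2/2 + u^2 / (10 * (1 - u^2))"
proof -
  define g where
    "g x = x^2/2 + x^2 / (10 * (1 - x^2)) - 3/5 * ((1 + x) * ln (1 + x) + (1 - x) * ln (1 - x))"
    for x :: real
  have "g 0 \<le> g u"
  proof (rule DERIV_nonneg_imp_nondecreasing[OF assms(1)])
    fix x :: real assume "0 \<le> x" "x \<le> u"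
    with assms have x: "0 \<le> x" "x < 1" by auto
    define w where "w = 1 - x^2"
    have w: "0 < w" unfolding w_def using x by (simp add: abs_square_less_1)
    have "((\<lambda>z. z^2 / (10 * (1 - z^2))) has_real_derivative
        (2 * x * (10 * w) - x^2 * (10 * (- (2 * x)))) / (10 * w * (10 * w))) (at x)"
      using w by (auto intro!: derivative_eq_intros simp: w_def)
    moreover have "(2 * x * (10 * w) - x^2 * (10 * (- (2 * x)))) / (10 * w * (10 * w)) = x / (5 * w^2)"
    proof -
      have x2: "x^2 = 1 - w" by (simp add: w_def)
      show ?thesis unfolding x2 using w by (simp add: field_simps power2_eq_square)
    qed
    ultimately have "((\<lambda>z. z^2 / (10 * (1 - z^2))) has_real_derivative x / (5 * w^2)) (at x)"
      by simp
    moreover have "((\<lambda>z. z^2/2) has_real_derivative x) (at x)"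
      by (auto intro!: derivative_eq_intros)
    moreover have "((\<lambda>z. (1 + z) * ln (1 + z)) has_real_derivative ln (1 + x) + 1) (at x)"
      using x by (auto intro!: derivative_eq_intros)
    moreover have "((\<lambda>z. (1 - z) * ln (1 - z)) has_real_derivative - ln (1 - x) - 1) (at x)"
      using x by (auto intro!: derivative_eq_intros)
    ultimately have deriv: "(g has_real_derivative
        x + x / (5 * w^2) - 3/5 * ((ln (1 + x) + 1) + (- ln (1 - x) - 1))) (at x)"
      unfolding g_def by (intro DERIV_add DERIV_diff DERIV_cmult)
    have "3/5 * (ln (1 + x) - ln (1 - x)) \<le> x + x / (5 * w^2)"
      using ln_one_plus_minus_ln_one_minus_le[OF x] by (simp add: w_def field_simps)
    then show "\<exists>y. (g has_real_derivative y) (at x) \<and> 0 \<le> y"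
      using deriv by (intro exI[of _ "x + x / (5 * w^2) - 3/5 * (ln (1 + x) - ln (1 - x))"]) simp
  qed
  then show ?thesis by (simp add: g_def)
qed

lemma one_plus_minus_xlnx_le:
  fixes u :: real assumes "\<bar>u\<bar> < 1"
  shows "3/5 * ((1 + u) * ln (1 + u) + (1 - u) * ln (1 - u)) \<le> u^2/2 + u^2 / (10 * (1 - u^2))"
proof (cases "0 \<le> u")
  case True
  with assms show ?thesis by (intro one_plus_minus_xlnx_le_nonneg) auto
next
  case False
  with assms have "3/5 * ((1 + -u) * ln (1 + -u) + (1 - -u) * ln (1 - -u))
      \<le> (-u)^2/2 + (-u)^2 / (10 * (1 - (-u)^2))"
    by (intro one_plus_minus_xlnx_le_nonneg) auto
  then show ?thesis by (simp add: algebra_simps)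
qed

definition Psi_term :: "real \<Rightarrow> real \<Rightarrow> real" where
  "Psi_term p q = (p - q)^2 * (p + q) / (p * q)"

definition Delta_term :: "real \<Rightarrow> real \<Rightarrow> real" where
  "Delta_term p q = (p - q)^2 / (p + q)"

definition I_term :: "real \<Rightarrow> real \<Rightarrow> real" where
  "I_term p q = (p * ln (2 * p / (p + q)) + q * ln (2 * q / (p + q))) / 2"

lemma Psi_div_eq_sum: "Psi_div n p q = (\<Sum>i<n. Psi_term (p i) (q i))"
  by (simp add: Psi_div_def Psi_term_def)

lemma Delta_div_eq_sum: "Delta_div n p q = (\<Sum>i<n. Delta_term (p i) (q i))"
  by (simp add: Delta_div_def Delta_term_def)

lemma I_div_eq_sum: "I_div n p q = (\<Sum>i<n. I_term (p i) (q i))"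
  by (simp add: I_div_def I_term_def sum.distrib flip: sum_divide_distrib)

lemma Psi_term_centered:
  assumes "s \<noteq> 0" "\<bar>u\<bar> < 1"
  shows "Psi_term (s * (1 + u)) (s * (1 - u)) = 8 * s * (u^2 / (1 - u^2))"
proof -
  have "u^2 < 1" using assms(2) by (simp add: abs_square_less_1)
  then have "1 - u^2 \<noteq> 0" "1 + u \<noteq> 0" "1 - u \<noteq> 0" using assms(2) by auto
  with assms(1) show ?thesis by (simp add: Psi_term_def field_simps power2_eq_square)
qed

lemma Delta_term_centered:
  assumes "s \<noteq> 0"
  shows "Delta_term (s * (1 + u)) (s * (1 - u)) = 2 * s * u^2"
  using assms by (simp add: Delta_term_def field_simps power2_eq_square)

lemma I_term_centered:
  assumes "s \<noteq> 0"
  shows "I_term (s * (1 + u)) (s * (1 - u)) = s/2 * ((1 + u) * ln (1 + u) + (1 - u) * ln (1 - u))"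
proof -
  have ratios: "2 * (s * (1 + u)) / (s * (1 + u) + s * (1 - u)) = 1 + u"
      "2 * (s * (1 - u)) / (s * (1 + u) + s * (1 - u)) = 1 - u"
    using assms by (simp_all add: field_simps)
  show ?thesis unfolding I_term_def ratios by (simp add: field_simps)
qed

lemma Psi_Delta_term_le_Psi_I_term:
  fixes p q :: real assumes "0 < p" "0 < q"
  shows "1/16 * Psi_term p q - 1/4 * Delta_term p q \<le> 6/5 * (1/16 * Psi_term p q - I_term p q)"
proof -
  define s where "s = (p + q) / 2"
  define u where "u = (p - q) / (p + q)"
  have "0 < s" using assms by (simp add: s_def)
  have "\<bar>u\<bar> < 1" using assms by (simp add: u_def divide_less_eq abs_less_iff)
  have p: "p = s * (1 + u)" and q: "q = s * (1 - u)"
    using assms by (simp_all add: s_def u_def field_simps)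
  define h where "h = (1 + u) * ln (1 + u) + (1 - u) * ln (1 - u)"
  define r where "r = u^2 / (1 - u^2)"
  have "u^2 / (10 * (1 - u^2)) = r/10" by (simp add: r_def)
  then have "3/5 * h \<le> u^2/2 + r/10"
    using one_plus_minus_xlnx_le[OF \<open>\<bar>u\<bar> < 1\<close>] by (simp only: h_def)
  then have "s * (3/5 * h) \<le> s * (u^2/2 + r/10)"
    using \<open>0 < s\<close> by (simp add: mult_left_mono)
  moreover have "s \<noteq> 0" using \<open>0 < s\<close> by simp
  ultimately show ?thesis
    unfolding p q Psi_term_centered[OF \<open>s \<noteq> 0\<close> \<open>\<bar>u\<bar> < 1\<close>]
      Delta_term_centered[OF \<open>s \<noteq> 0\<close>] I_term_centered[OF \<open>s \<noteq> 0\<close>]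
      h_def[symmetric] r_def[symmetric]
    by (simp add: algebra_simps)
qed

theorem proposition5p10:
  fixes n :: nat and P Q :: "nat \<Rightarrow> real"
  assumes "n \<ge> 2" and "P \<in> Gamma n" and "Q \<in> Gamma n"
  shows "D_Psi_Delta n P Q \<le> (6/5) * D_Psi_I n P Q"
proof -
  have pos: "0 < P i" "0 < Q i" if "i < n" for i
    using assms(2,3) that by (simp_all add: Gamma_def)
  have "D_Psi_Delta n P Q = (\<Sum>i<n. 1/16 * Psi_term (P i) (Q i) - 1/4 * Delta_term (P i) (Q i))"
    by (simp add: D_Psi_Delta_def Psi_div_eq_sum Delta_div_eq_sum sum_subtractf sum_distrib_left)
  also have "\<dots> \<le> (\<Sum>i<n. 6/5 * (1/16 * Psi_term (P i) (Q i) - I_term (P i) (Q i)))"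
    by (intro sum_mono Psi_Delta_term_le_Psi_I_term pos) simp_all
  also have "\<dots> = 6/5 * (\<Sum>i<n. 1/16 * Psi_term (P i) (Q i) - I_term (P i) (Q i))"
    by (simp only: sum_distrib_left)
  also have "\<dots> = (6/5) * D_Psi_I n P Q"
    by (simp add: D_Psi_I_def Psi_div_eq_sum I_div_eq_sum sum_subtractf sum_distrib_left)
  finally show ?thesis .
qed

end
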